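(* Let $B_J\in\mathbb R^{n\times n}$ satisfy $B_J\ge O$ elementwise and $\rho(B_J)>0$, and let $\mathcal B=(B_1,\dots,B_d)$ be a splitting of $B_J$ of order $d\ge2$. Then: (a1) $\rho(B_J)<1\iff\rho(T(\mathcal B))<1$; (a2) $\rho(B_J)=1\iff\rho(T(\mathcal B))=1$; (a3) $\rho(B_J)>1\iff\rho(T(\mathcal B))>1$.
   Context: For $B\in\mathbb R^{n\times n}$, a splitting of $B$ of order $d\ge1$ is an ordered $d$-tuple $\mathcal B=(B_1,\dots,B_d)$ of real $n\times n$ matrices with $B_p\neq O$ for all $p$, $\sum_{p=1}^d B_p=B$, and $B_p\circ B_q=O$ (Hadamard product) for $p\ne q$. The iteration matrix of $\mathcal B$ is the $dn\times dn$ matrix $T(\mathcal B)=(I_{dn}-\mathcal L)^{-1}\mathcal U$, where $\mathcal L,\mathcal U$ are $d\times d$ block matrices with $n\times n$ blocks, $\mathcal L_{ij}=B_j$ if $i>j$ and $O$ otherwise, $\mathcal U_{ij}=B_j$ if $i\le j$ and $O$ otherwise. $\rho$ denotes spectral radius. *)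

theory Defs
  imports "Jordan_Normal_Form.Spectral_Radius" "Jordan_Normal_Form.Gauss_Jordan_Elimination"
begin

definition hadamard_mat :: "real mat \<Rightarrow> real mat \<Rightarrow> real mat" where
  "hadamard_mat A C = mat (dim_row A) (dim_col A) (\<lambda>(i,j). A $$ (i,j) * C $$ (i,j))"

definition is_splitting :: "nat \<Rightarrow> real mat \<Rightarrow> real mat list \<Rightarrow> bool" where
  "is_splitting n B Bs \<longleftrightarrow>
     length Bs \<ge> 1 \<and>
     (\<forall>p < length Bs. Bs ! p \<in> carrier_mat n n \<and> Bs ! p \<noteq> 0\<^sub>m n n) \<and>
     mat n n (\<lambda>(i,j). \<Sum>p<length Bs. (Bs ! p) $$ (i,j)) = B \<and>
     (\<forall>p < length Bs. \<forall>q < length Bs. p \<noteq> q \<longrightarrow> hadamard_mat (Bs ! p) (Bs ! q) = 0\<^sub>m n n)"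

(* block matrices: block (a,b) of size n x n sits at rows a*n.., columns b*n.. *)
definition split_L :: "nat \<Rightarrow> real mat list \<Rightarrow> real mat" where
  "split_L n Bs = mat (length Bs * n) (length Bs * n)
     (\<lambda>(i,j). if i div n > j div n then (Bs ! (j div n)) $$ (i mod n, j mod n) else 0)"

definition split_U :: "nat \<Rightarrow> real mat list \<Rightarrow> real mat" where
  "split_U n Bs = mat (length Bs * n) (length Bs * n)
     (\<lambda>(i,j). if i div n \<le> j div n then (Bs ! (j div n)) $$ (i mod n, j mod n) else 0)"

definition iteration_mat :: "nat \<Rightarrow> real mat list \<Rightarrow> real mat" where
  "iteration_mat n Bs = the (mat_inverse (1\<^sub>m (length Bs * n) - split_L n Bs)) * split_U n Bs"

definition rho :: "real mat \<Rightarrow> real" where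
  "rho A = spectral_radius (map_mat complex_of_real A)"

end

theory Submission
  imports Defs
begin

text \<open>For a nonnegative matrix \<open>A\<close> and \<open>s > 0\<close>, \<open>\<rho>(A) < s\<close> holds iff \<open>A u < s u\<close> for some
  positive vector \<open>u\<close>: one direction is the Collatz--Wielandt bound, the other a truncated Neumann
  series. Since \<open>L\<close> is nonnegative and strictly block lower triangular, \<open>(I - L) z \<ge> 0\<close> forces
  \<open>z \<ge> 0\<close>, and \<open>T = (I - L)\<^sup>-\<^sup>1 U\<close> satisfies \<open>(I - L)(I - T) = I - L - U\<close>. Hence such a
  vector for \<open>B\<close>, repeated in every block, is one for \<open>T\<close>; conversely a positive \<open>x\<close> with
  \<open>(I - L - U) x > 0\<close> gives one for \<open>B\<close> by taking minima over the blocks. For \<open>0 < t \<le> 1\<close> the iteration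
  matrix of the splitting of \<open>t B\<close> lies entrywise between \<open>t\<^sup>d T\<close> and \<open>t T\<close>, so applying the
  first equivalence to \<open>t B\<close> with a suitable \<open>t\<close>, together with monotonicity and homogeneity of
  \<open>\<rho>\<close>, gives \<open>\<rho>(B) > 1 \<longleftrightarrow> \<rho>(T) > 1\<close>; the case \<open>\<rho> = 1\<close> is what remains.\<close>

section \<open>Spectral radius of nonnegative matrices\<close>

lemma eigenvector_smult_mat:
  assumes "C \<in> carrier_mat N N" and "eigenvector C z \<mu>"
  shows "eigenvector (c \<cdot>\<^sub>m C) z (c * \<mu>)"
proof -
  from assms have z: "z \<in> carrier_vec N" "z \<noteq> 0\<^sub>v N" and "C *\<^sub>v z = \<mu> \<cdot>\<^sub>v z"
    by (auto simp: eigenvector_def)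
  moreover have "(c \<cdot>\<^sub>m C) *\<^sub>v z = c \<cdot>\<^sub>v (C *\<^sub>v z)"
    using assms(1) z(1) by (intro eq_vecI) auto
  ultimately show ?thesis
    using assms(1) by (auto simp: eigenvector_def smult_smult_assoc)
qed

lemma spectral_radius_smult_ge:
  assumes C: "C \<in> carrier_mat N N" and N: "N > 0"
  shows "norm c * spectral_radius C \<le> spectral_radius (c \<cdot>\<^sub>m C)"
proof -
  from spectral_radius_mem_max(1)[OF C N] obtain \<mu> z
    where "spectral_radius C = norm \<mu>" and "eigenvector C z \<mu>"
    by (auto simp: spectrum_def eigenvalue_def)
  moreover from this have "c * \<mu> \<in> spectrum (c \<cdot>\<^sub>m C)"
    using eigenvector_smult_mat[OF C] by (auto simp: spectrum_def eigenvalue_def)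
  ultimately show ?thesis
    using spectral_radius_mem_max(2)[of "c \<cdot>\<^sub>m C" N] C N by (metis imageI norm_mult smult_carrier_mat)
qed

lemma spectral_radius_smult:
  assumes C: "C \<in> carrier_mat N N" and N: "N > 0" and c: "c \<noteq> 0"
  shows "spectral_radius (c \<cdot>\<^sub>m C) = norm c * spectral_radius C"
proof -
  have "(1 / c) \<cdot>\<^sub>m (c \<cdot>\<^sub>m C) = C"
    using C c by (intro eq_matI) auto
  with spectral_radius_smult_ge[of "c \<cdot>\<^sub>m C" N "1 / c"] C N c
  have "spectral_radius (c \<cdot>\<^sub>m C) \<le> norm c * spectral_radius C"
    by (auto simp: norm_divide field_simps)
  with spectral_radius_smult_ge[OF C N, of c] show ?thesis by linarith
qed

lemma rho_smult:
  assumes "A \<in> carrier_mat N N" and "N > 0" and "c > 0"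
  shows "rho (c \<cdot>\<^sub>m A) = c * rho A"
proof -
  have "map_mat complex_of_real (c \<cdot>\<^sub>m A) = complex_of_real c \<cdot>\<^sub>m map_mat complex_of_real A"
    by (intro eq_matI) auto
  with assms spectral_radius_smult[of "map_mat complex_of_real A" N "complex_of_real c"]
  show ?thesis by (simp add: rho_def)
qed

lemma rho_nonneg: "A \<in> carrier_mat N N \<Longrightarrow> N > 0 \<Longrightarrow> rho A \<ge> 0"
  using spectral_radius_mem_max(1)[of "map_mat complex_of_real A" N] by (auto simp: rho_def)

lemma smult_pow_mat:
  "(A :: 'a :: comm_ring_1 mat) \<in> carrier_mat N N \<Longrightarrow> (c \<cdot>\<^sub>m A) ^\<^sub>m k = c ^ k \<cdot>\<^sub>m A ^\<^sub>m k"
proof (induction k)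
  case (Suc k)
  have "(c \<cdot>\<^sub>m A) ^\<^sub>m Suc k = c ^ k \<cdot>\<^sub>m ((A ^\<^sub>m k) * (c \<cdot>\<^sub>m A))"
    using Suc by (simp add: mult_smult_assoc_mat[of _ N N _ N])
  also have "(A ^\<^sub>m k) * (c \<cdot>\<^sub>m A) = c \<cdot>\<^sub>m (A ^\<^sub>m k * A)"
    using Suc by (simp add: mult_smult_distrib[of _ N N _ N])
  finally show ?case
    using Suc by auto
qed auto

lemma rho_less_1_pow_small:
  assumes A: "A \<in> carrier_mat N N" and "rho A < 1" and "\<epsilon> > 0"
  shows "\<exists>K. \<forall>i<N. \<forall>j<N. \<bar>(A ^\<^sub>m K) $$ (i,j)\<bar> \<le> \<epsilon>"
proof (cases "N = 0")
  case False
  define r where "r = (max (rho A) 0 + 1) / 2"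
  have r: "0 < r" "r < 1" "rho A < r"
    using \<open>rho A < 1\<close> by (auto simp: r_def)
  have "rho ((1 / r) \<cdot>\<^sub>m A) = rho A / r"
    using r rho_smult[OF A, of "1 / r"] False by simp
  with r have "rho ((1 / r) \<cdot>\<^sub>m A) < 1"
    by (simp add: divide_less_eq)
  then obtain c where c: "\<And>k. norm_bound (map_mat complex_of_real ((1 / r) \<cdot>\<^sub>m A) ^\<^sub>m k) c"
    using spectral_radius_jnf_norm_bound_less_1_upper_triangular[of _ N] A
    unfolding rho_def by (metis map_carrier_mat smult_carrier_mat)
  have bound: "\<bar>(A ^\<^sub>m k) $$ (i,j)\<bar> \<le> c * r ^ k" if "i < N" "j < N" for i j k
  proof -
    have "map_mat complex_of_real ((1 / r) \<cdot>\<^sub>m A) ^\<^sub>m k = map_mat complex_of_real (((1 / r) \<cdot>\<^sub>m A) ^\<^sub>m k)"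
      using A by (intro of_real_hom.mat_hom_pow[of _ N, symmetric]) simp
    also have "\<dots> = map_mat complex_of_real ((1 / r) ^ k \<cdot>\<^sub>m A ^\<^sub>m k)"
      by (simp add: smult_pow_mat[OF A])
    finally have "norm_bound (map_mat complex_of_real ((1 / r) ^ k \<cdot>\<^sub>m A ^\<^sub>m k)) c"
      using c[of k] by simp
    then have "norm (complex_of_real (((1 / r) ^ k \<cdot>\<^sub>m A ^\<^sub>m k) $$ (i,j))) \<le> c"
      using that A unfolding norm_bound_def by auto
    then have "(1 / r) ^ k * \<bar>(A ^\<^sub>m k) $$ (i,j)\<bar> \<le> c"
      using that A r by (simp only: norm_of_real) (simp add: abs_mult)
    with r show ?thesis by (simp add: field_simps)
  qed
  obtain K where "c * r ^ K \<le> \<epsilon>"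
  proof (cases "c \<le> 0")
    case True
    with that[of 0] \<open>\<epsilon> > 0\<close> show thesis by simp
  next
    case False
    with real_arch_pow_inv[of "\<epsilon> / c" r] r \<open>\<epsilon> > 0\<close> obtain K where "r ^ K < \<epsilon> / c" by auto
    with False that[of K] show thesis by (simp add: field_simps)
  qed
  with bound show ?thesis by (meson order_trans)
qed simp

definition mult_fun :: "real mat \<Rightarrow> (nat \<Rightarrow> real) \<Rightarrow> nat \<Rightarrow> real" where
  "mult_fun A v i = (\<Sum>j=0..<dim_col A. A $$ (i,j) * v j)"

lemma mult_fun_mult_mat:
  assumes A: "A \<in> carrier_mat N N" and M: "M \<in> carrier_mat N N" and i: "i < N"
  shows "mult_fun A (mult_fun M v) i = mult_fun (A * M) v i"
proof -
  have "mult_fun A (mult_fun M v) i = (\<Sum>j=0..<N. \<Sum>k=0..<N. A $$ (i,j) * (M $$ (j,k) * v k))"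
    unfolding mult_fun_def using A M by (simp add: sum_distrib_left)
  also have "\<dots> = (\<Sum>k=0..<N. \<Sum>j=0..<N. A $$ (i,j) * (M $$ (j,k) * v k))"
    by (rule sum.swap)
  also have "\<dots> = mult_fun (A * M) v i"
    unfolding mult_fun_def using A M i
    by (auto simp: scalar_prod_def sum_distrib_left sum_distrib_right algebra_simps intro!: sum.cong)
  finally show ?thesis .
qed

lemma mult_fun_one_mat: "i < N \<Longrightarrow> mult_fun (1\<^sub>m N) v i = v i"
  by (simp add: mult_fun_def if_distrib[of "\<lambda>x. x * _"] cong: if_cong)

lemma mult_fun_add_mat:
  "A \<in> carrier_mat N N \<Longrightarrow> C \<in> carrier_mat N N \<Longrightarrow> i < N \<Longrightarrow>
    mult_fun (A + C) v i = mult_fun A v i + mult_fun C v i"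
  by (simp add: mult_fun_def sum.distrib algebra_simps)

lemma mult_fun_minus_mat:
  "A \<in> carrier_mat N N \<Longrightarrow> C \<in> carrier_mat N N \<Longrightarrow> i < N \<Longrightarrow>
    mult_fun (A - C) v i = mult_fun A v i - mult_fun C v i"
  by (simp add: mult_fun_def sum_subtractf algebra_simps)

lemma mult_fun_diff: "mult_fun A (\<lambda>j. v j - w j) i = mult_fun A v i - mult_fun A w i"
  by (simp add: mult_fun_def sum_subtractf algebra_simps)

lemma mult_fun_nonneg:
  "A \<in> carrier_mat N N \<Longrightarrow> \<forall>i<N. \<forall>j<N. A $$ (i,j) \<ge> 0 \<Longrightarrow> \<forall>j<N. v j \<ge> 0 \<Longrightarrow> i < N \<Longrightarrow>
    mult_fun A v i \<ge> 0"
  unfolding mult_fun_def by (auto intro!: sum_nonneg)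

lemma pow_mat_Suc_left:
  assumes A: "(A :: 'a :: semiring_1 mat) \<in> carrier_mat N N"
  shows "A * A ^\<^sub>m k = A ^\<^sub>m Suc k"
proof (induction k)
  case (Suc k)
  then show ?case
    using assoc_mult_mat[OF A pow_carrier_mat[OF A, of k] A] by simp
qed (use A in simp)

lemma pow_mat_nonneg:
  assumes A: "A \<in> carrier_mat N N" and "\<forall>i<N. \<forall>j<N. A $$ (i,j) \<ge> (0 :: real)"
  shows "\<forall>i<N. \<forall>j<N. (A ^\<^sub>m k) $$ (i,j) \<ge> 0"
proof (induction k)
  case (Suc k)
  then show ?case
    using assms by (auto simp: scalar_prod_def intro!: sum_nonneg)
qed (use A in auto)

lemma mult_fun_neumann_telescope:
  fixes K :: nat and c :: "nat \<Rightarrow> real"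
  assumes A: "A \<in> carrier_mat N N" and i: "i < N"
  defines "x \<equiv> \<lambda>l. \<Sum>m<K. mult_fun (A ^\<^sub>m m) c l"
  shows "x i - mult_fun A x i = c i - mult_fun (A ^\<^sub>m K) c i"
proof -
  have "mult_fun A x i = (\<Sum>m<K. mult_fun A (mult_fun (A ^\<^sub>m m) c) i)"
    unfolding x_def mult_fun_def using A by (simp add: sum_distrib_left sum.swap[of _ "{0..<N}"])
  also have "\<dots> = (\<Sum>m<K. mult_fun (A ^\<^sub>m Suc m) c i)"
    using mult_fun_mult_mat[OF A _ i] pow_mat_Suc_left[OF A] A by (intro sum.cong) auto
  moreover have telescope: "(\<Sum>m<K. f m) - (\<Sum>m<K. f (Suc m)) = f 0 - f K" for f :: "nat \<Rightarrow> real"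
    by (induction K) auto
  ultimately show ?thesis
    using telescope[of "\<lambda>m. mult_fun (A ^\<^sub>m m) c i"] mult_fun_one_mat[OF i] A by (simp add: x_def)
qed

lemma neumann_partial_sum:
  assumes A: "A \<in> carrier_mat N N" and A_nonneg: "\<forall>i<N. \<forall>j<N. A $$ (i,j) \<ge> 0"
    and "rho A < 1" and c_nonneg: "\<forall>j<N. c j \<ge> 0" and "\<delta> > 0"
  shows "\<exists>x. (\<forall>i<N. x i \<ge> 0) \<and> (\<forall>i<N. \<bar>x i - mult_fun A x i - c i\<bar> \<le> \<delta>)"
proof -
  define C where "C = (\<Sum>j=0..<N. c j)"
  have "C \<ge> 0"
    using c_nonneg by (auto simp: C_def intro!: sum_nonneg)
  with \<open>\<delta> > 0\<close> obtain K where K: "\<forall>i<N. \<forall>j<N. \<bar>(A ^\<^sub>m K) $$ (i,j)\<bar> \<le> \<delta> / (C + 1)"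
    using rho_less_1_pow_small[OF A \<open>rho A < 1\<close>, of "\<delta> / (C + 1)"] by auto
  define x where "x = (\<lambda>l. \<Sum>m<K. mult_fun (A ^\<^sub>m m) c l)"
  have "\<bar>x i - mult_fun A x i - c i\<bar> \<le> \<delta>" if i: "i < N" for i
  proof -
    have "\<bar>mult_fun (A ^\<^sub>m K) c i\<bar> \<le> (\<Sum>j=0..<N. \<bar>(A ^\<^sub>m K) $$ (i,j)\<bar> * c j)"
      unfolding mult_fun_def using A c_nonneg
      by (auto simp: abs_mult intro!: order_trans[OF sum_abs] sum_mono)
    also have "\<dots> \<le> (\<Sum>j=0..<N. \<delta> / (C + 1) * c j)"
      using K i c_nonneg by (intro sum_mono mult_right_mono) auto
    also have "\<dots> = \<delta> * (C / (C + 1))"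
      by (simp add: C_def sum_distrib_left sum_divide_distrib)
    also have "\<dots> \<le> \<delta>"
      using \<open>C \<ge> 0\<close> \<open>\<delta> > 0\<close> by (intro mult_left_le) auto
    finally show ?thesis
      using mult_fun_neumann_telescope[OF A i, where K = K and c = c] by (simp add: x_def)
  qed
  moreover have "\<forall>i<N. x i \<ge> 0"
    using mult_fun_nonneg[OF pow_carrier_mat[OF A] pow_mat_nonneg[OF A A_nonneg] c_nonneg]
    by (auto simp: x_def intro!: sum_nonneg)
  ultimately show ?thesis by blast
qed

lemma mult_fun_smult_mat:
  "A \<in> carrier_mat N N \<Longrightarrow> i < N \<Longrightarrow> mult_fun (c \<cdot>\<^sub>m A) v i = c * mult_fun A v i"
  by (simp add: mult_fun_def sum_distrib_left ac_simps)

lemma rho_le_subinvariant: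
  assumes A: "A \<in> carrier_mat N N" and N: "N > 0"
    and A_nonneg: "\<forall>i<N. \<forall>j<N. A $$ (i,j) \<ge> 0"
    and u_pos: "\<forall>i<N. u i > 0" and sub: "\<forall>i<N. mult_fun A u i \<le> \<theta> * u i"
  shows "rho A \<le> \<theta>"
proof -
  let ?C = "map_mat complex_of_real A"
  have C: "?C \<in> carrier_mat N N" using A by auto
  from spectral_radius_mem_max(1)[OF C N] obtain \<mu> z
    where rho: "rho A = norm \<mu>" and "eigenvector ?C z \<mu>"
    by (auto simp: rho_def spectrum_def eigenvalue_def)
  then have z: "z \<in> carrier_vec N" "z \<noteq> 0\<^sub>v N" and ev: "?C *\<^sub>v z = \<mu> \<cdot>\<^sub>v z"
    using C by (auto simp: eigenvector_def)
  define t where "t = Max ((\<lambda>i. norm (z $ i) / u i) ` {0..<N})"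
  have "t \<in> (\<lambda>i. norm (z $ i) / u i) ` {0..<N}"
    unfolding t_def using N by (intro Max_in) auto
  then obtain i0 where i0: "i0 < N" "t = norm (z $ i0) / u i0"
    by auto
  have z_le: "norm (z $ j) \<le> t * u j" if "j < N" for j
  proof -
    have "norm (z $ j) / u j \<le> t"
      unfolding t_def using that by (intro Max_ge) auto
    with u_pos that show ?thesis
      by (simp add: divide_le_eq)
  qed
  obtain j where j: "j < N" "z $ j \<noteq> 0"
    using z by (metis carrier_vecD eq_vecI index_zero_vec)
  then have "0 < norm (z $ j)"
    by simp
  also have "\<dots> \<le> t * u j"
    using z_le j by blast
  finally have "t > 0"
    using u_pos j by (metis zero_less_mult_pos2)
  have "u i0 > 0"
    using i0(1) u_pos by blast
  with i0 have "t * u i0 = norm (z $ i0)"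
    by simp
  then have "norm \<mu> * (t * u i0) = norm (\<Sum>j=0..<N. complex_of_real (A $$ (i0,j)) * z $ j)"
    using arg_cong[OF ev, of "\<lambda>v. v $ i0"] A z i0 by (auto simp: scalar_prod_def norm_mult)
  also have "\<dots> \<le> (\<Sum>j=0..<N. A $$ (i0,j) * norm (z $ j))"
    using A_nonneg i0 by (auto simp: norm_mult intro!: order_trans[OF norm_sum] sum_mono)
  also have "\<dots> \<le> (\<Sum>j=0..<N. A $$ (i0,j) * (t * u j))"
    using A_nonneg i0 z_le by (intro sum_mono mult_left_mono) auto
  also have "\<dots> = t * mult_fun A u i0"
    using A by (simp add: mult_fun_def sum_distrib_left ac_simps)
  also have "\<dots> \<le> t * (\<theta> * u i0)"
    using sub i0 \<open>t > 0\<close> by (intro mult_left_mono) auto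
  finally have "norm \<mu> * (t * u i0) \<le> \<theta> * (t * u i0)"
    by (simp add: ac_simps)
  moreover have "t * u i0 > 0"
    using \<open>t > 0\<close> u_pos i0(1) by simp
  ultimately show ?thesis
    using rho mult_le_cancel_right_pos by metis
qed

lemma rho_less_iff_subinvariant:
  assumes A: "A \<in> carrier_mat N N" and N: "N > 0"
    and A_nonneg: "\<forall>i<N. \<forall>j<N. A $$ (i,j) \<ge> 0" and "s > 0"
  shows "rho A < s \<longleftrightarrow> (\<exists>u. (\<forall>i<N. u i > 0) \<and> (\<forall>i<N. mult_fun A u i < s * u i))"
proof
  assume "rho A < s"
  let ?A = "(1 / s) \<cdot>\<^sub>m A"
  have A': "?A \<in> carrier_mat N N" and A'_nonneg: "\<forall>i<N. \<forall>j<N. ?A $$ (i,j) \<ge> 0"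
    using A A_nonneg \<open>s > 0\<close> by auto
  have "rho ?A < 1"
    using rho_smult[OF A N, of "1 / s"] \<open>rho A < s\<close> \<open>s > 0\<close> by simp
  from neumann_partial_sum[OF A' A'_nonneg this, of "\<lambda>_. 1" "1 / 2"]
  obtain x where x_nonneg: "\<forall>i<N. x i \<ge> 0" and x: "\<forall>i<N. \<bar>x i - mult_fun ?A x i - 1\<bar> \<le> 1 / 2"
    by auto
  have "x i > 0" "mult_fun A x i < s * x i" if "i < N" for i
  proof -
    have "mult_fun ?A x i \<ge> 0"
      using mult_fun_nonneg[OF A' A'_nonneg x_nonneg that] .
    moreover have "\<bar>x i - mult_fun ?A x i - 1\<bar> \<le> 1 / 2"
      using x that by blast
    then have "x i - mult_fun ?A x i \<ge> 1 / 2"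
      using abs_ge_minus_self[of "x i - mult_fun ?A x i - 1"] by linarith
    ultimately show "x i > 0"
      by linarith
    from \<open>x i - mult_fun ?A x i \<ge> 1 / 2\<close> have "mult_fun ?A x i < x i"
      by linarith
    with \<open>s > 0\<close> that show "mult_fun A x i < s * x i"
      by (simp add: mult_fun_smult_mat[OF A] field_simps)
  qed
  then show "\<exists>u. (\<forall>i<N. u i > 0) \<and> (\<forall>i<N. mult_fun A u i < s * u i)" by blast
next
  assume "\<exists>u. (\<forall>i<N. u i > 0) \<and> (\<forall>i<N. mult_fun A u i < s * u i)"
  then obtain u where u_pos: "\<forall>i<N. u i > 0" and sub: "\<forall>i<N. mult_fun A u i < s * u i"
    by blast
  define \<theta> where "\<theta> = Max ((\<lambda>i. mult_fun A u i / u i) ` {0..<N})"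
  have "\<theta> \<in> (\<lambda>i. mult_fun A u i / u i) ` {0..<N}"
    unfolding \<theta>_def using N by (intro Max_in) auto
  then obtain i0 where "i0 < N" "\<theta> = mult_fun A u i0 / u i0"
    by auto
  with sub u_pos have "\<theta> < s"
    by (simp add: divide_less_eq)
  moreover have "\<forall>i<N. mult_fun A u i \<le> \<theta> * u i"
  proof (intro allI impI)
    fix i assume "i < N"
    have "mult_fun A u i / u i \<le> \<theta>"
      unfolding \<theta>_def using \<open>i < N\<close> by (intro Max_ge) auto
    with u_pos \<open>i < N\<close> show "mult_fun A u i \<le> \<theta> * u i"
      by (simp add: divide_le_eq)
  qed
  ultimately show "rho A < s"
    using rho_le_subinvariant[OF A N A_nonneg u_pos] by (meson le_less_trans)
qed

lemma rho_mono:
  assumes A: "A \<in> carrier_mat N N" and C: "C \<in> carrier_mat N N" and N: "N > 0"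
    and A_nonneg: "\<forall>i<N. \<forall>j<N. A $$ (i,j) \<ge> 0"
    and le: "\<forall>i<N. \<forall>j<N. A $$ (i,j) \<le> C $$ (i,j)"
  shows "rho A \<le> rho C"
proof (rule dense_ge)
  fix s assume "rho C < s"
  moreover have C_nonneg: "\<forall>i<N. \<forall>j<N. C $$ (i,j) \<ge> 0"
    using A_nonneg le by (meson order_trans)
  moreover have "s > 0"
    using rho_nonneg[OF C N] \<open>rho C < s\<close> by linarith
  ultimately obtain u where u_pos: "\<forall>i<N. u i > 0" and sub: "\<forall>i<N. mult_fun C u i < s * u i"
    using rho_less_iff_subinvariant[OF C N] by blast
  have "mult_fun A u i \<le> mult_fun C u i" if "i < N" for i
    using le u_pos that unfolding mult_fun_def carrier_matD(2)[OF A] carrier_matD(2)[OF C]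
    by (intro sum_mono mult_right_mono) (auto simp: less_imp_le)
  with sub have "\<forall>i<N. mult_fun A u i < s * u i"
    by (meson order_le_less_trans)
  with u_pos have "rho A < s"
    using rho_less_iff_subinvariant[OF A N A_nonneg \<open>s > 0\<close>] by blast
  then show "rho A \<le> s"
    by simp
qed

lemma lower_graded_supersolution_nonneg:
  fixes lev :: "nat \<Rightarrow> nat"
  assumes L: "L \<in> carrier_mat N N" and L_nonneg: "\<forall>i<N. \<forall>j<N. L $$ (i,j) \<ge> 0"
    and lower: "\<forall>i<N. \<forall>j<N. L $$ (i,j) \<noteq> 0 \<longrightarrow> lev j < lev i"
    and super: "\<forall>i<N. mult_fun L z i \<le> z i"
  shows "\<forall>i<N. z i \<ge> 0"
proof -
  have "\<forall>i<N. lev i = a \<longrightarrow> z i \<ge> 0" for a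
  proof (induction a rule: less_induct)
    case (less a)
    show ?case
    proof (intro allI impI)
      fix i assume i: "i < N" and "lev i = a"
      have "L $$ (i,j) * z j \<ge> 0" if "j < N" for j
      proof (cases "L $$ (i,j) = 0")
        case False
        then have "z j \<ge> 0"
          using less[of "lev j"] lower i \<open>j < N\<close> \<open>lev i = a\<close> by auto
        then show ?thesis
          using L_nonneg i \<open>j < N\<close> by simp
      qed simp
      then have "mult_fun L z i \<ge> 0"
        using L by (auto simp: mult_fun_def intro!: sum_nonneg)
      with super i show "z i \<ge> 0" by force
    qed
  qed
  then show ?thesis by blast
qed

lemma sum_div_mod_blocks:
  fixes d n :: nat
  shows "(\<Sum>j=0..<d*n. g (j div n) (j mod n)) = (\<Sum>b=0..<d. \<Sum>c=0..<n. g b c :: 'a :: comm_monoid_add)"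
proof (induction d)
  case (Suc d)
  have "(\<Sum>j=0..<Suc d*n. g (j div n) (j mod n)) =
     (\<Sum>j=0..<d*n. g (j div n) (j mod n)) + (\<Sum>j=d*n..<d*n+n. g (j div n) (j mod n))"
    by (subst sum.atLeastLessThan_concat[symmetric]) (auto simp: add.commute)
  also have "(\<Sum>j=d*n..<d*n+n. g (j div n) (j mod n)) = (\<Sum>c=0..<n. g ((c + d*n) div n) ((c + d*n) mod n))"
    using sum.shift_bounds_nat_ivl[of "\<lambda>j. g (j div n) (j mod n)" 0 "d*n" n] by (simp add: add.commute)
  also have "\<dots> = (\<Sum>c=0..<n. g d c)"
    by (intro sum.cong) auto
  finally show ?case
    using Suc by simp
qed simp

section \<open>Nonnegative splittings\<close>

lemma is_splitting_smult:
  assumes split: "is_splitting n B Bs" and B: "B \<in> carrier_mat n n" and "t \<noteq> 0"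
  shows "is_splitting n (t \<cdot>\<^sub>m B) (map ((\<cdot>\<^sub>m) t) Bs)"
  unfolding is_splitting_def
proof (intro conjI allI impI)
  show "length (map ((\<cdot>\<^sub>m) t) Bs) \<ge> 1"
    using split by (simp add: is_splitting_def)
  fix p assume p: "p < length (map ((\<cdot>\<^sub>m) t) Bs)"
  then have Bp: "Bs ! p \<in> carrier_mat n n" "Bs ! p \<noteq> 0\<^sub>m n n"
    using split by (auto simp: is_splitting_def)
  then show "map ((\<cdot>\<^sub>m) t) Bs ! p \<in> carrier_mat n n"
    using p by simp
  show "map ((\<cdot>\<^sub>m) t) Bs ! p \<noteq> 0\<^sub>m n n"
  proof
    assume "map ((\<cdot>\<^sub>m) t) Bs ! p = 0\<^sub>m n n"
    then have "(1 / t) \<cdot>\<^sub>m (t \<cdot>\<^sub>m Bs ! p) = 0\<^sub>m n n"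
      using p by simp
    moreover have "(1 / t) \<cdot>\<^sub>m (t \<cdot>\<^sub>m Bs ! p) = Bs ! p"
      using Bp(1) \<open>t \<noteq> 0\<close> by (intro eq_matI) auto
    ultimately show False
      using Bp(2) by simp
  qed
  fix q assume q: "q < length (map ((\<cdot>\<^sub>m) t) Bs)" and "p \<noteq> q"
  then have "hadamard_mat (Bs ! p) (Bs ! q) = 0\<^sub>m n n"
    using split p by (simp add: is_splitting_def)
  moreover have Bq: "Bs ! q \<in> carrier_mat n n"
    using split q by (simp add: is_splitting_def)
  ultimately have "Bs ! p $$ (i,j) * Bs ! q $$ (i,j) = 0" if "i < n" "j < n" for i j
    using arg_cong[of _ _ "\<lambda>X. X $$ (i,j)"] Bp(1) that by (fastforce simp: hadamard_mat_def)
  then show "hadamard_mat (map ((\<cdot>\<^sub>m) t) Bs ! p) (map ((\<cdot>\<^sub>m) t) Bs ! q) = 0\<^sub>m n n"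
    using p q Bp(1) Bq by (intro eq_matI) (auto simp: hadamard_mat_def)
next
  have "(\<Sum>p<length (map ((\<cdot>\<^sub>m) t) Bs). (map ((\<cdot>\<^sub>m) t) Bs ! p) $$ (i,j)) = t * B $$ (i,j)"
    if "i < n" "j < n" for i j
  proof -
    have "(\<Sum>p<length (map ((\<cdot>\<^sub>m) t) Bs). (map ((\<cdot>\<^sub>m) t) Bs ! p) $$ (i,j)) =
        t * (\<Sum>p<length Bs. Bs ! p $$ (i,j))"
      using split that by (auto simp: is_splitting_def sum_distrib_left intro!: sum.cong)
    also have "\<dots> = t * B $$ (i,j)"
      using split that by (auto simp: is_splitting_def)
    finally show ?thesis .
  qed
  then show "mat n n (\<lambda>(i,j). \<Sum>p<length (map ((\<cdot>\<^sub>m) t) Bs). (map ((\<cdot>\<^sub>m) t) Bs ! p) $$ (i,j)) = t \<cdot>\<^sub>m B"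
    using B by (intro eq_matI) auto
qed

locale nonneg_splitting =
  fixes n :: nat and B :: "real mat" and Bs :: "real mat list"
  assumes B_carrier: "B \<in> carrier_mat n n"
    and B_nonneg: "\<forall>i<n. \<forall>j<n. B $$ (i,j) \<ge> 0"
    and splitting: "is_splitting n B Bs"
begin

abbreviation "d \<equiv> length Bs"
abbreviation "N \<equiv> d * n"
abbreviation "L \<equiv> split_L n Bs"
abbreviation "U \<equiv> split_U n Bs"
abbreviation "T \<equiv> iteration_mat n Bs"

lemma d_pos: "d > 0"
  using splitting unfolding is_splitting_def by (cases Bs) auto

lemma Bs_carrier: "p < d \<Longrightarrow> Bs ! p \<in> carrier_mat n n"
  using splitting by (simp add: is_splitting_def)

lemma n_pos: "n > 0"
proof (rule ccontr)
  assume "\<not> n > 0"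
  with d_pos splitting have "Bs ! 0 \<in> carrier_mat 0 0" "Bs ! 0 \<noteq> 0\<^sub>m 0 0"
    by (auto simp: is_splitting_def)
  then show False
    by (auto intro!: eq_matI)
qed

lemma N_pos: "N > 0"
  using n_pos d_pos by simp

lemma B_entry: "r < n \<Longrightarrow> c < n \<Longrightarrow> B $$ (r,c) = (\<Sum>p<d. (Bs ! p) $$ (r,c))"
  using splitting by (auto simp: is_splitting_def)

text \<open>The blocks have disjoint supports, so each entry of a block is an entry of \<open>B\<close>.\<close>

lemma Bs_nonneg:
  assumes p: "p < d" and rc: "r < n" "c < n"
  shows "(Bs ! p) $$ (r,c) \<ge> 0"
proof (cases "(Bs ! p) $$ (r,c) = 0")
  case False
  have "(Bs ! q) $$ (r,c) = 0" if "q < d" "q \<noteq> p" for q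
  proof -
    have "hadamard_mat (Bs ! p) (Bs ! q) $$ (r,c) = 0"
      using splitting p that rc by (auto simp: is_splitting_def)
    with False show ?thesis
      using Bs_carrier[OF p] rc by (simp add: hadamard_mat_def)
  qed
  then have "B $$ (r,c) = (Bs ! p) $$ (r,c)"
    using B_entry[OF rc] p by (simp add: sum.remove[of "{..<d}" p] sum.neutral)
  moreover have "B $$ (r,c) \<ge> 0"
    using B_nonneg rc by blast
  ultimately show ?thesis by simp
qed simp

lemma L_carrier: "L \<in> carrier_mat N N"
  and U_carrier: "U \<in> carrier_mat N N"
  by (simp_all add: split_L_def split_U_def)

lemma one_minus_L_carrier: "1\<^sub>m N - L \<in> carrier_mat N N"
  using L_carrier by auto

lemma div_less_d: "j < N \<Longrightarrow> j div n < d"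
  by (simp add: less_mult_imp_div_less)

lemma L_entry:
  "i < N \<Longrightarrow> j < N \<Longrightarrow>
    L $$ (i,j) = (if j div n < i div n then (Bs ! (j div n)) $$ (i mod n, j mod n) else 0)"
  by (simp add: split_L_def)

lemma U_entry:
  "i < N \<Longrightarrow> j < N \<Longrightarrow>
    U $$ (i,j) = (if i div n \<le> j div n then (Bs ! (j div n)) $$ (i mod n, j mod n) else 0)"
  by (simp add: split_U_def)

lemma L_nonneg: "\<forall>i<N. \<forall>j<N. L $$ (i,j) \<ge> 0"
  using L_entry Bs_nonneg div_less_d n_pos by simp

lemma U_nonneg: "\<forall>i<N. \<forall>j<N. U $$ (i,j) \<ge> 0"
  using U_entry Bs_nonneg div_less_d n_pos by simp

lemma L_lower: "\<forall>i<N. \<forall>j<N. L $$ (i,j) \<noteq> 0 \<longrightarrow> j div n < i div n"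
  using L_entry by auto

lemma det_one_minus_L: "det (1\<^sub>m N - L) = 1"
proof -
  let ?A = "transpose_mat (1\<^sub>m N - L)"
  have A: "?A \<in> carrier_mat N N"
    using L_carrier by auto
  have "upper_triangular ?A"
  proof (rule upper_triangularI)
    fix i j assume "j < i" and "i < dim_row ?A"
    moreover from this have "\<not> i div n < j div n"
      by (simp add: div_le_mono leD)
    ultimately show "?A $$ (i,j) = 0"
      using L_carrier L_entry[of j i] by auto
  qed
  moreover have "diag_mat ?A = replicate N 1"
    unfolding diag_mat_def using L_carrier L_entry by (intro nth_equalityI) auto
  ultimately have "det ?A = 1"
    using det_upper_triangular[OF _ A] by simp
  then show ?thesis
    using det_transpose[OF one_minus_L_carrier] by simp
qed

lemma one_minus_L_inverse:
  obtains M where "M \<in> carrier_mat N N" "(1\<^sub>m N - L) * M = 1\<^sub>m N"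
    "T = M * U"
proof -
  have "1\<^sub>m N - L \<in> Units (ring_mat TYPE(real) N ())"
    using L_carrier det_one_minus_L by (intro det_non_zero_imp_unit) auto
  then obtain M where M: "mat_inverse (1\<^sub>m N - L) = Some M"
    using mat_inverse(1)[of "1\<^sub>m N - L" N] L_carrier by fastforce
  with mat_inverse(2)[OF one_minus_L_carrier]
  have "M \<in> carrier_mat N N" "(1\<^sub>m N - L) * M = 1\<^sub>m N"
    by auto
  with that[of M] M show ?thesis
    by (simp add: iteration_mat_def)
qed

lemma T_carrier: "T \<in> carrier_mat N N"
  using one_minus_L_inverse U_carrier by (metis mult_carrier_mat)

lemma T_fixed_point: "T = L * T + U"
proof -
  obtain M where M: "M \<in> carrier_mat N N" "(1\<^sub>m N - L) * M = 1\<^sub>m N" "T = M * U"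
    by (rule one_minus_L_inverse)
  have "T - L * T = (1\<^sub>m N - L) * T"
    using minus_mult_distrib_mat[OF one_carrier_mat L_carrier T_carrier] T_carrier by simp
  also have "\<dots> = U"
    using assoc_mult_mat[OF one_minus_L_carrier M(1) U_carrier] M(2,3) U_carrier by simp
  finally have "T - L * T = U" .
  show ?thesis
  proof (rule eq_matI)
    fix i j assume "i < dim_row (L * T + U)" "j < dim_col (L * T + U)"
    with L_carrier U_carrier have "i < N" "j < N"
      by auto
    moreover have "(T - L * T) $$ (i,j) = U $$ (i,j)"
      using \<open>T - L * T = U\<close> by simp
    ultimately show "T $$ (i,j) = (L * T + U) $$ (i,j)"
      using L_carrier T_carrier U_carrier by simp
  qed (use L_carrier T_carrier U_carrier in auto)
qed

lemma T_entry:
  assumes "k < N" "j < N"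
  shows "T $$ (k,j) = (\<Sum>l=0..<N. L $$ (k,l) * T $$ (l,j)) + U $$ (k,j)"
proof -
  have "T $$ (k,j) = (L * T + U) $$ (k,j)"
    by (rule arg_cong[OF T_fixed_point])
  with assms L_carrier T_carrier U_carrier show ?thesis
    by (simp add: scalar_prod_def)
qed

lemma mult_fun_T:
  assumes "i < N"
  shows "mult_fun T x i = mult_fun L (mult_fun T x) i + mult_fun U x i"
proof -
  have "mult_fun T x i = mult_fun (L * T + U) x i"
    by (rule arg_cong[OF T_fixed_point])
  with assms L_carrier T_carrier U_carrier show ?thesis
    by (simp add: mult_fun_add_mat[of _ N] mult_fun_mult_mat)
qed

lemma T_nonneg: "\<forall>i<N. \<forall>j<N. T $$ (i,j) \<ge> 0"
proof (intro allI impI)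
  fix i j assume "i < N" "j < N"
  have "\<forall>k<N. mult_fun L (\<lambda>k. T $$ (k,j)) k \<le> T $$ (k,j)"
  proof (intro allI impI)
    fix k assume "k < N"
    with U_nonneg \<open>j < N\<close> have "U $$ (k,j) \<ge> 0"
      by blast
    with T_entry[OF \<open>k < N\<close> \<open>j < N\<close>] L_carrier show "mult_fun L (\<lambda>k. T $$ (k,j)) k \<le> T $$ (k,j)"
      unfolding mult_fun_def by simp
  qed
  with lower_graded_supersolution_nonneg[OF L_carrier L_nonneg L_lower] \<open>i < N\<close>
  show "T $$ (i,j) \<ge> 0" by blast
qed

lemma block_index_less: "b < d \<Longrightarrow> c < n \<Longrightarrow> b * n + c < N"
  by (metis add.commute add_less_cancel_left mult.commute mult_Suc_right less_eq_Suc_le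
      mult_le_mono2 order_less_le_trans)

lemma mult_fun_L_plus_U:
  assumes "i < N"
  shows "mult_fun L x i + mult_fun U x i =
    (\<Sum>b=0..<d. \<Sum>c=0..<n. (Bs ! b) $$ (i mod n, c) * x (b * n + c))"
proof -
  have "mult_fun L x i + mult_fun U x i = (\<Sum>j=0..<N. (L $$ (i,j) + U $$ (i,j)) * x j)"
    using L_carrier U_carrier by (simp add: mult_fun_def sum.distrib algebra_simps)
  also have "\<dots> = (\<Sum>j=0..<N. (Bs ! (j div n)) $$ (i mod n, j mod n) * x (j div n * n + j mod n))"
    using L_entry U_entry assms by (intro sum.cong) auto
  also have "\<dots> = (\<Sum>b=0..<d. \<Sum>c=0..<n. (Bs ! b) $$ (i mod n, c) * x (b * n + c))"
    by (rule sum_div_mod_blocks)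
  finally show ?thesis .
qed

lemma mult_fun_B:
  assumes "r < n"
  shows "mult_fun B w r = (\<Sum>b=0..<d. \<Sum>c=0..<n. (Bs ! b) $$ (r, c) * w c)"
proof -
  have "mult_fun B w r = (\<Sum>c=0..<n. \<Sum>b=0..<d. (Bs ! b) $$ (r, c) * w c)"
    using B_carrier B_entry assms by (auto simp: mult_fun_def sum_distrib_right atLeast0LessThan)
  also have "\<dots> = (\<Sum>b=0..<d. \<Sum>c=0..<n. (Bs ! b) $$ (r, c) * w c)"
    by (rule sum.swap)
  finally show ?thesis .
qed

lemma rho_T_less_1_if_rho_B_less_1:
  assumes "rho B < 1"
  shows "rho T < 1"
proof -
  obtain u where u_pos: "\<forall>r<n. u r > 0" and sub: "\<forall>r<n. mult_fun B u r < u r"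
    using assms rho_less_iff_subinvariant[OF B_carrier n_pos B_nonneg, of 1] by auto
  define X where "X = (\<lambda>j. u (j mod n))"
  define w where "w = (\<lambda>i. X i - mult_fun T X i)"
  have gap: "w i - mult_fun L w i > 0" if "i < N" for i
  proof -
    have "w i - mult_fun L w i = X i - (mult_fun L X i + mult_fun U X i)"
      using mult_fun_T[OF that, of X] by (simp add: w_def mult_fun_diff)
    also have "\<dots> = u (i mod n) - mult_fun B u (i mod n)"
      using mult_fun_L_plus_U[OF that] mult_fun_B[of "i mod n"] n_pos by (simp add: X_def)
    finally show ?thesis
      using sub n_pos by simp
  qed
  then have "\<forall>i<N. w i \<ge> 0"
    by (intro lower_graded_supersolution_nonneg[OF L_carrier L_nonneg L_lower])
      (simp add: less_imp_le)
  have "\<forall>i<N. mult_fun T X i < 1 * X i"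
  proof (intro allI impI)
    fix i assume "i < N"
    with mult_fun_nonneg[OF L_carrier L_nonneg \<open>\<forall>i<N. w i \<ge> 0\<close>] gap
    show "mult_fun T X i < 1 * X i"
      by (fastforce simp: w_def)
  qed
  moreover have "\<forall>i<N. X i > 0"
    using u_pos n_pos by (simp add: X_def)
  ultimately show ?thesis
    using rho_less_iff_subinvariant[OF T_carrier N_pos T_nonneg, of 1] by auto
qed

lemma rho_B_less_1_if_rho_T_less_1:
  assumes "rho T < 1"
  shows "rho B < 1"
proof -
  obtain M where M: "M \<in> carrier_mat N N" "(1\<^sub>m N - L) * M = 1\<^sub>m N"
    by (rule one_minus_L_inverse)
  define c where "c = mult_fun M (\<lambda>_. 1)"
  \<comment> \<open>\<open>x\<close> below approximates \<open>(I - T)\<^sup>-\<^sup>1 c\<close>, so \<open>(I - L - U) x = (I - L) (I - T) x\<close> is close to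
    \<open>(I - L) c = 1\<close>.\<close>
  have c_gap: "c i - mult_fun L c i = 1" if "i < N" for i
    using mult_fun_mult_mat[OF one_minus_L_carrier M(1) that] M(2) mult_fun_one_mat[OF that]
      mult_fun_minus_mat[OF one_carrier_mat L_carrier that]
    by (simp add: c_def)
  then have "\<forall>i<N. mult_fun L c i \<le> c i"
    by fastforce
  then have c_nonneg: "\<forall>i<N. c i \<ge> 0"
    by (rule lower_graded_supersolution_nonneg[OF L_carrier L_nonneg L_lower])
  define \<sigma> where "\<sigma> = (\<Sum>i=0..<N. \<Sum>j=0..<N. L $$ (i,j))"
  have row_le: "(\<Sum>j=0..<N. L $$ (i,j)) \<le> \<sigma>" if "i < N" for i
    unfolding \<sigma>_def using that L_nonneg
    by (intro member_le_sum[of i "{0..<N}" "\<lambda>i. \<Sum>j=0..<N. L $$ (i,j)"]) (auto intro!: sum_nonneg)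
  have "\<sigma> \<ge> 0"
    using L_nonneg by (auto simp: \<sigma>_def intro!: sum_nonneg)
  define \<delta> where "\<delta> = 1 / (2 * (\<sigma> + 1))"
  have "\<delta> > 0" and \<delta>_small: "\<delta> + \<delta> * \<sigma> \<le> 1 / 2"
    using \<open>\<sigma> \<ge> 0\<close> by (auto simp: \<delta>_def field_simps)
  obtain x where x_nonneg: "\<forall>i<N. x i \<ge> 0"
    and x: "\<forall>i<N. \<bar>x i - mult_fun T x i - c i\<bar> \<le> \<delta>"
    using neumann_partial_sum[OF T_carrier T_nonneg assms c_nonneg \<open>\<delta> > 0\<close>] by blast
  define v where "v = (\<lambda>i. x i - mult_fun T x i)"
  define r where "r = (\<lambda>i. v i - c i)"
  have x_gap: "x i - (mult_fun L x i + mult_fun U x i) \<ge> 1 / 2" if "i < N" for i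
  proof -
    have r_le: "\<bar>r j\<bar> \<le> \<delta>" if "j < N" for j
      using x that by (simp add: r_def v_def)
    have "\<bar>mult_fun L r i\<bar> \<le> (\<Sum>j=0..<N. \<bar>L $$ (i,j) * r j\<bar>)"
      unfolding mult_fun_def carrier_matD(2)[OF L_carrier] by (rule sum_abs)
    also have "\<dots> \<le> (\<Sum>j=0..<N. L $$ (i,j) * \<delta>)"
      using L_nonneg r_le that by (intro sum_mono) (simp add: abs_mult mult_left_mono)
    also have "\<dots> = \<delta> * (\<Sum>j=0..<N. L $$ (i,j))"
      by (simp add: sum_distrib_left mult.commute)
    also have "\<dots> \<le> \<delta> * \<sigma>"
      using row_le[OF that] \<open>\<delta> > 0\<close> by simp
    finally have "\<bar>mult_fun L r i\<bar> \<le> \<delta> * \<sigma>" .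
    moreover have "\<bar>r i\<bar> \<le> \<delta>"
      using r_le[OF that] .
    moreover have "x i - (mult_fun L x i + mult_fun U x i) = 1 + r i - mult_fun L r i"
      using mult_fun_T[OF that, of x] c_gap[OF that]
      by (simp add: r_def v_def mult_fun_diff)
    ultimately show ?thesis
      using \<delta>_small by linarith
  qed
  define u where "u = (\<lambda>c. Min ((\<lambda>b. x (b * n + c)) ` {0..<d}))"
  have u_le: "u c \<le> x (b * n + c)" if "b < d" for b c
    unfolding u_def using that by (intro Min_le) auto
  have "mult_fun B u r < u r \<and> u r > 0" if "r < n" for r
  proof -
    have "u r \<in> (\<lambda>b. x (b * n + r)) ` {0..<d}"
      unfolding u_def using d_pos by (intro Min_in) auto
    then obtain b where b: "b < d" "u r = x (b * n + r)"
      by auto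
    have bnr: "b * n + r < N" "(b * n + r) mod n = r"
      using block_index_less[OF b(1) that] that by auto
    have "mult_fun B u r \<le> (\<Sum>b=0..<d. \<Sum>c=0..<n. (Bs ! b) $$ (r, c) * x (b * n + c))"
      unfolding mult_fun_B[OF that] using Bs_nonneg that u_le
      by (intro sum_mono mult_left_mono) auto
    also have "\<dots> = mult_fun L x (b * n + r) + mult_fun U x (b * n + r)"
      using mult_fun_L_plus_U[OF bnr(1)] bnr(2) by simp
    also have "\<dots> < u r"
      using x_gap[OF bnr(1)] b(2) by simp
    finally have "mult_fun B u r < u r" .
    moreover have "mult_fun L x (b * n + r) + mult_fun U x (b * n + r) \<ge> 0"
      using mult_fun_nonneg[OF L_carrier L_nonneg x_nonneg bnr(1)]
        mult_fun_nonneg[OF U_carrier U_nonneg x_nonneg bnr(1)] by simp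
    ultimately show ?thesis
      using x_gap[OF bnr(1)] b(2) by simp
  qed
  then show ?thesis
    using rho_less_iff_subinvariant[OF B_carrier n_pos B_nonneg, of 1] by auto
qed

lemma rho_B_less_1_iff: "rho B < 1 \<longleftrightarrow> rho T < 1"
  using rho_T_less_1_if_rho_B_less_1 rho_B_less_1_if_rho_T_less_1 by blast

lemma nonneg_splitting_smult:
  "t > 0 \<Longrightarrow> nonneg_splitting n (t \<cdot>\<^sub>m B) (map ((\<cdot>\<^sub>m) t) Bs)"
  using B_carrier B_nonneg is_splitting_smult[OF splitting B_carrier, of t]
  by unfold_locales auto

lemma split_L_smult: "split_L n (map ((\<cdot>\<^sub>m) t) Bs) = t \<cdot>\<^sub>m L"
  and split_U_smult: "split_U n (map ((\<cdot>\<^sub>m) t) Bs) = t \<cdot>\<^sub>m U"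
proof -
  have "(t \<cdot>\<^sub>m Bs ! (j div n)) $$ (i mod n, j mod n) = t * Bs ! (j div n) $$ (i mod n, j mod n)"
    if "j < N" for i j
    using Bs_carrier[OF div_less_d[OF that]] n_pos by simp
  then show "split_L n (map ((\<cdot>\<^sub>m) t) Bs) = t \<cdot>\<^sub>m L" "split_U n (map ((\<cdot>\<^sub>m) t) Bs) = t \<cdot>\<^sub>m U"
    using div_less_d by (auto simp: split_L_def split_U_def intro!: eq_matI)
qed

lemma iteration_mat_smult_le:
  assumes t: "0 < t" "t \<le> 1" and ij: "i < N" "j < N"
  shows "iteration_mat n (map ((\<cdot>\<^sub>m) t) Bs) $$ (i,j) \<le> t * T $$ (i,j)"
proof -
  interpret S: nonneg_splitting n "t \<cdot>\<^sub>m B" "map ((\<cdot>\<^sub>m) t) Bs"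
    by (rule nonneg_splitting_smult[OF t(1)])
  let ?Tt = "iteration_mat n (map ((\<cdot>\<^sub>m) t) Bs)"
  define z where "z = (\<lambda>k. t * T $$ (k,j) - ?Tt $$ (k,j))"
  have "mult_fun (t \<cdot>\<^sub>m L) z k \<le> z k" if k: "k < N" for k
  proof -
    let ?LT = "\<Sum>l=0..<N. L $$ (k,l) * T $$ (l,j)"
    have Tt: "?Tt $$ (k,j) = (\<Sum>l=0..<N. t * L $$ (k,l) * ?Tt $$ (l,j)) + t * U $$ (k,j)"
      using S.T_entry[of k j] k ij L_carrier U_carrier by (simp add: split_L_smult split_U_smult)
    have "?LT \<ge> 0"
      using L_nonneg T_nonneg k ij by (auto intro!: sum_nonneg)
    then have "t * (t * ?LT) \<le> t * ?LT"
      using t by (simp add: mult_left_le_one_le)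
    moreover have "mult_fun (t \<cdot>\<^sub>m L) z k = t * (t * ?LT) - (\<Sum>l=0..<N. t * L $$ (k,l) * ?Tt $$ (l,j))"
      using L_carrier k
      by (simp add: mult_fun_def z_def algebra_simps sum_subtractf sum_distrib_left)
    moreover have "z k = t * ?LT - (\<Sum>l=0..<N. t * L $$ (k,l) * ?Tt $$ (l,j))"
      using T_entry[OF k ij(2)] Tt by (simp add: z_def algebra_simps)
    ultimately show ?thesis
      by linarith
  qed
  then have "\<forall>k<N. z k \<ge> 0"
    using lower_graded_supersolution_nonneg[OF S.L_carrier S.L_nonneg S.L_lower]
    by (simp add: split_L_smult)
  with ij show ?thesis
    by (simp add: z_def)
qed

text \<open>Block row \<open>a\<close> of \<open>T\<close> only involves the terms \<open>L\<^sup>k U\<close> with \<open>k \<le> a\<close> of the expansion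
  \<open>T = (\<Sum>k<d. L\<^sup>k) U\<close>, and the scaled splitting multiplies \<open>L\<^sup>k U\<close> by \<open>t\<^sup>k\<^sup>+\<^sup>1\<close>.\<close>

lemma iteration_mat_smult_ge:
  assumes t: "0 < t" "t \<le> 1" and ij: "i < N" "j < N"
  shows "t ^ d * T $$ (i,j) \<le> iteration_mat n (map ((\<cdot>\<^sub>m) t) Bs) $$ (i,j)"
proof -
  interpret S: nonneg_splitting n "t \<cdot>\<^sub>m B" "map ((\<cdot>\<^sub>m) t) Bs"
    by (rule nonneg_splitting_smult[OF t(1)])
  let ?Tt = "iteration_mat n (map ((\<cdot>\<^sub>m) t) Bs)"
  define z where "z = (\<lambda>k. ?Tt $$ (k,j) - t ^ (k div n + 1) * T $$ (k,j))"
  have "mult_fun (t \<cdot>\<^sub>m L) z k \<le> z k" if k: "k < N" for k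
  proof -
    define a where "a = k div n"
    have Tt: "?Tt $$ (k,j) = (\<Sum>l=0..<N. t * L $$ (k,l) * ?Tt $$ (l,j)) + t * U $$ (k,j)"
      using S.T_entry[of k j] k ij L_carrier U_carrier by (simp add: split_L_smult split_U_smult)
    have "z k - mult_fun (t \<cdot>\<^sub>m L) z k = (t - t ^ (a + 1)) * U $$ (k,j)
        + (\<Sum>l=0..<N. L $$ (k,l) * ((t ^ (l div n + 2) - t ^ (a + 1)) * T $$ (l,j)))"
      using T_entry[OF k ij(2)] Tt L_carrier k
      by (simp add: mult_fun_def z_def a_def algebra_simps sum_subtractf sum_distrib_left sum.distrib
          power_add power2_eq_square)
    moreover have "(t - t ^ (a + 1)) * U $$ (k,j) \<ge> 0"
      using t U_nonneg k ij by (simp add: power_le_one mult_left_le)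
    moreover have "(\<Sum>l=0..<N. L $$ (k,l) * ((t ^ (l div n + 2) - t ^ (a + 1)) * T $$ (l,j))) \<ge> 0"
    proof (rule sum_nonneg)
      fix l assume "l \<in> {0..<N}"
      then have "l < N" by simp
      show "L $$ (k,l) * ((t ^ (l div n + 2) - t ^ (a + 1)) * T $$ (l,j)) \<ge> 0"
      proof (cases "L $$ (k,l) = 0")
        case False
        with L_lower k \<open>l < N\<close> have "l div n < a"
          by (auto simp: a_def)
        with t have "t ^ (a + 1) \<le> t ^ (l div n + 2)"
          by (intro power_decreasing) auto
        with L_nonneg T_nonneg k ij \<open>l < N\<close> show ?thesis
          by simp
      qed simp
    qed
    ultimately show ?thesis
      by linarith
  qed
  then have "\<forall>k<N. z k \<ge> 0"
    using lower_graded_supersolution_nonneg[OF S.L_carrier S.L_nonneg S.L_lower]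
    by (simp add: split_L_smult)
  then have "t ^ (i div n + 1) * T $$ (i,j) \<le> ?Tt $$ (i,j)"
    using ij by (simp add: z_def)
  moreover have "t ^ d \<le> t ^ (i div n + 1)"
    using div_less_d[OF ij(1)] t by (intro power_decreasing) auto
  ultimately show ?thesis
    using T_nonneg ij by (meson mult_right_mono order_trans)
qed

lemma rho_T_gt_1_if_rho_B_gt_1:
  assumes "rho B > 1"
  shows "rho T > 1"
proof -
  define t where "t = 1 / rho B"
  have t: "0 < t" "t \<le> 1"
    using assms by (auto simp: t_def)
  interpret S: nonneg_splitting n "t \<cdot>\<^sub>m B" "map ((\<cdot>\<^sub>m) t) Bs"
    by (rule nonneg_splitting_smult[OF t(1)])
  have "rho (t \<cdot>\<^sub>m B) = 1"
    using rho_smult[OF B_carrier n_pos t(1)] assms by (simp add: t_def)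
  then have "1 \<le> rho (iteration_mat n (map ((\<cdot>\<^sub>m) t) Bs))"
    using S.rho_B_less_1_iff by simp
  also have "\<dots> \<le> rho (t \<cdot>\<^sub>m T)"
  proof (rule rho_mono[OF _ _ N_pos])
    show "iteration_mat n (map ((\<cdot>\<^sub>m) t) Bs) \<in> carrier_mat N N"
      and "\<forall>i<N. \<forall>j<N. iteration_mat n (map ((\<cdot>\<^sub>m) t) Bs) $$ (i,j) \<ge> 0"
      using S.T_carrier S.T_nonneg by simp_all
    show "\<forall>i<N. \<forall>j<N. iteration_mat n (map ((\<cdot>\<^sub>m) t) Bs) $$ (i,j) \<le> (t \<cdot>\<^sub>m T) $$ (i,j)"
      using iteration_mat_smult_le[OF t] T_carrier by simp
  qed (use T_carrier in simp)
  also have "\<dots> = t * rho T"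
    by (rule rho_smult[OF T_carrier N_pos t(1)])
  finally have "rho B \<le> rho T"
    using assms by (simp add: t_def field_simps)
  with assms show ?thesis
    by simp
qed

lemma rho_B_gt_1_if_rho_T_gt_1:
  assumes "rho T > 1"
  shows "rho B > 1"
proof -
  define t where "t = root d (1 / rho T)"
  have t: "0 < t" "t < 1" "t ^ d = 1 / rho T"
    using assms d_pos by (auto simp: t_def real_root_gt_zero)
  interpret S: nonneg_splitting n "t \<cdot>\<^sub>m B" "map ((\<cdot>\<^sub>m) t) Bs"
    by (rule nonneg_splitting_smult[OF t(1)])
  have "1 = rho (t ^ d \<cdot>\<^sub>m T)"
    using rho_smult[OF T_carrier N_pos, of "t ^ d"] t assms by simp
  also have "\<dots> \<le> rho (iteration_mat n (map ((\<cdot>\<^sub>m) t) Bs))"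
  proof (rule rho_mono[OF _ _ N_pos])
    show "iteration_mat n (map ((\<cdot>\<^sub>m) t) Bs) \<in> carrier_mat N N"
      using S.T_carrier by simp
    show "\<forall>i<N. \<forall>j<N. (t ^ d \<cdot>\<^sub>m T) $$ (i,j) \<ge> 0"
      using T_nonneg T_carrier t(1) by simp
    show "\<forall>i<N. \<forall>j<N. (t ^ d \<cdot>\<^sub>m T) $$ (i,j) \<le> iteration_mat n (map ((\<cdot>\<^sub>m) t) Bs) $$ (i,j)"
      using iteration_mat_smult_ge[OF t(1) less_imp_le[OF t(2)]] T_carrier by simp
  qed (use T_carrier in simp)
  finally have "1 \<le> t * rho B"
    using S.rho_B_less_1_iff rho_smult[OF B_carrier n_pos t(1)] by simp
  with t mult_less_cancel_left_pos[OF t(1), of 1 "rho B"] show ?thesis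
    by linarith
qed

lemma rho_B_gt_1_iff: "rho B > 1 \<longleftrightarrow> rho T > 1"
  using rho_T_gt_1_if_rho_B_gt_1 rho_B_gt_1_if_rho_T_gt_1 by blast

end

theorem lemma3p2:
  fixes n :: nat and BJ :: "real mat" and Bs :: "real mat list"
  assumes "BJ \<in> carrier_mat n n"
    and "\<forall>i < n. \<forall>j < n. BJ $$ (i,j) \<ge> 0"
    and "rho BJ > 0"
    and "is_splitting n BJ Bs"
    and "length Bs \<ge> 2"
  shows "(rho BJ < 1 \<longleftrightarrow> rho (iteration_mat n Bs) < 1)
       \<and> (rho BJ = 1 \<longleftrightarrow> rho (iteration_mat n Bs) = 1)
       \<and> (rho BJ > 1 \<longleftrightarrow> rho (iteration_mat n Bs) > 1)"
proof -
  interpret nonneg_splitting n BJ Bs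
    using assms(1,2,4) by unfold_locales
  from rho_B_less_1_iff rho_B_gt_1_iff show ?thesis
    by fastforce
qed

end
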